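(* Let $f:\mathbb{Z}^N\to\mathbb{R}\cup\{+\infty\}$ be an M-convex function with unique minimizer $x^*$, let $\hat{x}\in\mathbb{R}^N$, and let $x^\circ\in\arg\min\{\|x-\lfloor\hat{x}\rceil\|_1 : x\in\operatorname{dom} f\}$. Then $\|x^*-x^\circ\|_1\le 4\|\hat{x}-x^*\|_1$.
   Context: $N=\{1,\dots,n\}$, $e_i$ is the $i$th unit vector, $\operatorname{dom} f=\{x\in\mathbb{Z}^N: f(x)<+\infty\}$. A proper $f$ is M-convex if for all $x,y\in\operatorname{dom} f$ and every $i$ with $x_i>y_i$ there is $j$ with $x_j<y_j$ and $f(x)+f(y)\ge f(x-e_i+e_j)+f(y+e_i-e_j)$. $\lfloor\cdot\rceil$ is element-wise rounding to a closest integer. *)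

theory Defs
  imports "HOL-Library.Extended_Real"
begin

text \<open>Integer vectors in Z^N are functions from a finite index type 'n to int.
  Functions f : Z^N -> R \<union> {+\<infinity>} are modelled as maps into ereal that never take -\<infinity>.\<close>

definition dom_f :: "(('n \<Rightarrow> int) \<Rightarrow> ereal) \<Rightarrow> ('n \<Rightarrow> int) set" where
  "dom_f f = {x. f x < \<infinity>}"

definition unitv :: "'n \<Rightarrow> 'n \<Rightarrow> int" where
  "unitv i = (\<lambda>k. if k = i then 1 else 0)"

definition proper_fun :: "(('n \<Rightarrow> int) \<Rightarrow> ereal) \<Rightarrow> bool" where
  "proper_fun f \<longleftrightarrow> (\<forall>x. f x \<noteq> -\<infinity>) \<and> dom_f f \<noteq> {}"

definition M_convex :: "(('n \<Rightarrow> int) \<Rightarrow> ereal) \<Rightarrow> bool" where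
  "M_convex f \<longleftrightarrow> proper_fun f \<and>
     (\<forall>x\<in>dom_f f. \<forall>y\<in>dom_f f. \<forall>i. x i > y i \<longrightarrow>
        (\<exists>j. x j < y j \<and>
             f x + f y \<ge> f (\<lambda>k. x k - unitv i k + unitv j k) + f (\<lambda>k. y k + unitv i k - unitv j k)))"

definition l1_int :: "('n::finite \<Rightarrow> int) \<Rightarrow> int" where
  "l1_int x = (\<Sum>i\<in>UNIV. \<bar>x i\<bar>)"

definition l1_real :: "('n::finite \<Rightarrow> real) \<Rightarrow> real" where
  "l1_real x = (\<Sum>i\<in>UNIV. \<bar>x i\<bar>)"

definition is_rounding :: "('n \<Rightarrow> real) \<Rightarrow> ('n \<Rightarrow> int) \<Rightarrow> bool" where
  "is_rounding xhat r \<longleftrightarrow> (\<forall>i. \<forall>z::int. \<bar>xhat i - of_int (r i)\<bar> \<le> \<bar>xhat i - of_int z\<bar>)"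

end

theory Submission
  imports Defs
begin

text \<open>Only two facts are needed: \<open>x\<^sup>\<circ>\<close> is at least as close to the rounding \<open>r\<close>
  of \<open>x\<^sub>h\<close> as \<open>x\<^sup>*\<close> is, and rounding at most doubles the distance from \<open>x\<^sub>h\<close>
  to any integer point, since \<open>|z - r| \<le> |z - x\<^sub>h| + |x\<^sub>h - r| \<le> 2 |z - x\<^sub>h|\<close>.
  The triangle inequality then gives
  \<open>\<parallel>x\<^sup>* - x\<^sup>\<circ>\<parallel> \<le> \<parallel>x\<^sup>* - r\<parallel> + \<parallel>x\<^sup>\<circ> - r\<parallel> \<le> 2 \<parallel>x\<^sup>* - r\<parallel> \<le> 4 \<parallel>x\<^sub>h - x\<^sup>*\<parallel>\<close>.\<close>

lemma l1_int_diff_triangle: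
  "l1_int (\<lambda>i. x i - z i) \<le> l1_int (\<lambda>i. x i - y i) + l1_int (\<lambda>i. z i - y i)"
  unfolding l1_int_def sum.distrib[symmetric] by (rule sum_mono) linarith

lemma rounding_dist_le_twice:
  assumes "is_rounding xhat r"
  shows "\<bar>real_of_int (z - r i)\<bar> \<le> 2 * \<bar>xhat i - of_int z\<bar>"
proof -
  have "\<bar>xhat i - of_int (r i)\<bar> \<le> \<bar>xhat i - of_int z\<bar>"
    using assms unfolding is_rounding_def by blast
  then show ?thesis
    unfolding of_int_diff by (simp add: abs_if split: if_splits)
qed

lemma l1_rounding_le_twice:
  assumes "is_rounding xhat r"
  shows "of_int (l1_int (\<lambda>i. z i - r i)) \<le> 2 * l1_real (\<lambda>i. xhat i - of_int (z i))"
  unfolding l1_int_def l1_real_def of_int_sum sum_distrib_left of_int_abs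
  using rounding_dist_le_twice[OF assms] by (intro sum_mono) simp

theorem mainTheorem2:
  fixes f :: "('n::finite \<Rightarrow> int) \<Rightarrow> ereal"
    and xstar xcirc r :: "'n \<Rightarrow> int"
    and xhat :: "'n \<Rightarrow> real"
  assumes "M_convex f"
    and "xstar \<in> dom_f f"
    and "\<forall>y. f xstar \<le> f y"
    and "\<forall>y. f y = f xstar \<longrightarrow> y = xstar"
    and "is_rounding xhat r"
    and "xcirc \<in> dom_f f"
    and "\<forall>x\<in>dom_f f. l1_int (\<lambda>i. xcirc i - r i) \<le> l1_int (\<lambda>i. x i - r i)"
  shows "l1_int (\<lambda>i. xstar i - xcirc i) \<le> 4 * l1_real (\<lambda>i. xhat i - of_int (xstar i))"
proof -
  have "l1_int (\<lambda>i. xstar i - xcirc i) \<le> l1_int (\<lambda>i. xstar i - r i) + l1_int (\<lambda>i. xcirc i - r i)"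
    by (rule l1_int_diff_triangle)
  also have "\<dots> \<le> 2 * l1_int (\<lambda>i. xstar i - r i)"
    using assms(2,7) by auto
  finally have "of_int (l1_int (\<lambda>i. xstar i - xcirc i)) \<le> 2 * (of_int (l1_int (\<lambda>i. xstar i - r i)) :: real)"
    by linarith
  with l1_rounding_le_twice[OF assms(5), of xstar] show ?thesis
    by linarith
qed

end
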